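(* Let $G_0$ be the group of homeomorphisms of $\mathbb{R}$ generated by $a,b,c$ as in the context. The assignment $a\mapsto(1,0,0)$, $b\mapsto(0,1,0)$, $c\mapsto(0,0,1)$ extends to a surjective homomorphism $\pi:G_0\to\mathbb{Z}^3$ whose kernel is exactly the commutator subgroup $G_0'=[G_0,G_0]$.
   Context: The three generating homeomorphisms of $\mathbb{R}$ are as follows. - $a(t)=t+1$. - $b(t)=t$ for $t\le 0$, $b(t)=t/(1-t)$ for $0\le t\le 1/2$, $b(t)=(3t-1)/t$ for $1/2\le t\le 1$, $b(t)=t+1$ for $t\ge 1$. - $c(t)=2t/(t+1)$ for $0\le t\le 1$, and $c(t)=t$ otherwise. (In binary-sequence notation these are the maps $x$, $x_{\mathtt1}$, $y_{\mathtt{10}}$.) *)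

theory Defs
  imports Complex_Main "HOL-Algebra.Algebra"
begin

definition gen_a :: "real \<Rightarrow> real" where
  "gen_a t = t + 1"

definition gen_b :: "real \<Rightarrow> real" where
  "gen_b t = (if t \<le> 0 then t
              else if t \<le> 1/2 then t / (1 - t)
              else if t \<le> 1 then (3*t - 1) / t
              else t + 1)"

definition gen_c :: "real \<Rightarrow> real" where
  "gen_c t = (if 0 \<le> t \<and> t \<le> 1 then 2*t / (t + 1) else t)"

abbreviation SymR :: "(real \<Rightarrow> real) monoid" where
  "SymR \<equiv> BijGroup (UNIV :: real set)"

definition G0 :: "(real \<Rightarrow> real) monoid" where
  "G0 = SymR\<lparr>carrier := generate SymR {gen_a, gen_b, gen_c}\<rparr>"

definition Z3 :: "(int \<times> int \<times> int) monoid" where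
  "Z3 = integer_group \<times>\<times> integer_group \<times>\<times> integer_group"

end

theory Submission
  imports Defs
begin

text \<open>Every element of \<open>G\<^sub>0\<close> is an increasing homeomorphism of the line with positive one-sided
derivatives everywhere, finitely many breakpoints (points where the two one-sided derivatives differ),
and which is a translation near \<open>-\<infinity>\<close> and near \<open>+\<infinity>\<close>. For such maps the translation length
\<open>m\<^sub>-\<close> near \<open>-\<infinity>\<close>, the translation length \<open>m\<^sub>+\<close> near \<open>+\<infinity>\<close> and the sum \<open>L\<close> over the
breakpoints of \<open>log (f'(x+) / f'(x-))\<close> are additive under composition, by the chain rule. On
\<open>a\<close>, \<open>b\<close>, \<open>c\<close> they take the values \<open>(1, 1, 0)\<close>, \<open>(0, 1, 0)\<close> and \<open>(0, 0, 2 log 2)\<close>, so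
\<open>\<pi> = (m\<^sub>-, m\<^sub>+ - m\<^sub>-, L / (2 log 2))\<close> is a homomorphism to \<open>\<int>\<^sup>3\<close> sending \<open>a\<close>, \<open>b\<close>, \<open>c\<close>
to the standard basis, hence onto. Its kernel contains \<open>G\<^sub>0'\<close> because \<open>\<int>\<^sup>3\<close> is abelian.
Conversely, the abelianisation is generated by the images of \<open>a\<close>, \<open>b\<close>, \<open>c\<close>, so every \<open>g\<close> is
congruent modulo \<open>G\<^sub>0'\<close> to \<open>a\<^sup>i b\<^sup>j c\<^sup>k\<close> with \<open>(i, j, k) = \<pi> g\<close>.\<close>

section \<open>One-sided derivatives\<close>

definition right_deriv :: "(real \<Rightarrow> real) \<Rightarrow> real \<Rightarrow> real" where
  "right_deriv f x = (THE D. (f has_real_derivative D) (at x within {x..}))"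

definition left_deriv :: "(real \<Rightarrow> real) \<Rightarrow> real \<Rightarrow> real" where
  "left_deriv f x = (THE D. (f has_real_derivative D) (at x within {..x}))"

lemma right_deriv_eq:
  assumes "(f has_real_derivative D) (at x within {x..})"
  shows "right_deriv f x = D"
proof -
  have "at x within {x..} \<noteq> bot"
    by (simp add: at_within_Ici_at_right)
  then show ?thesis
    unfolding right_deriv_def using assms has_field_derivative_unique by blast
qed

lemma left_deriv_eq:
  assumes "(f has_real_derivative D) (at x within {..x})"
  shows "left_deriv f x = D"
proof -
  have "at x within {..x} \<noteq> bot"
    by (simp add: at_within_Iic_at_left)
  then show ?thesis
    unfolding left_deriv_def using assms has_field_derivative_unique by blast
qed

lemma has_real_derivative_at_within_Ici_transform:
  assumes "(g has_real_derivative D) (at x)" "0 < e" "\<And>y. x \<le> y \<Longrightarrow> y < x + e \<Longrightarrow> f y = g y"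
  shows "(f has_real_derivative D) (at x within {x..})"
  by (rule has_field_derivative_transform_within[OF has_field_derivative_at_within[OF assms(1)] assms(2)])
    (use assms(3) in \<open>auto simp: dist_real_def\<close>)

lemma has_real_derivative_at_within_Iic_transform:
  assumes "(g has_real_derivative D) (at x)" "0 < e" "\<And>y. x - e < y \<Longrightarrow> y \<le> x \<Longrightarrow> f y = g y"
  shows "(f has_real_derivative D) (at x within {..x})"
  by (rule has_field_derivative_transform_within[OF has_field_derivative_at_within[OF assms(1)] assms(2)])
    (use assms(3) in \<open>auto simp: dist_real_def\<close>)

lemma has_real_derivative_comp_mono:
  assumes "mono g" "(f has_real_derivative D) (at (g x) within g ` S)" "(g has_real_derivative E) (at x within S)"
  shows "((\<lambda>y. f (g y)) has_real_derivative D * E) (at x within S)"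
  using DERIV_image_chain[OF assms(2,3)] by (simp add: o_def)

lemma has_real_derivative_inverse_within:
  fixes f g :: "real \<Rightarrow> real"
  assumes der: "(f has_real_derivative D) (at (g y) within S)" and "D \<noteq> 0"
    and lim: "filterlim g (at (g y) within S) (at y within T)"
    and fg: "\<And>z. f (g z) = z"
  shows "(g has_real_derivative inverse D) (at y within T)"
proof -
  have "LIM x at (g y) within S. (f x - f (g y)) / (x - g y) :> nhds D"
    using der by (simp add: has_field_derivative_iff)
  from filterlim_compose[OF this lim]
  have "LIM z at y within T. (z - y) / (g z - g y) :> nhds D"
    by (simp add: fg)
  from tendsto_inverse[OF this \<open>D \<noteq> 0\<close>] show ?thesis
    by (simp add: has_field_derivative_iff)
qed

lemma mono_surj_isCont:
  fixes g :: "real \<Rightarrow> real"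
  assumes "mono g" "surj g"
  shows "isCont g x"
  using continuous_onI_mono[of g UNIV] assms by (simp add: monoD continuous_on_eq_continuous_at)

lemma filterlim_at_within_Ici_strict_mono:
  fixes g :: "real \<Rightarrow> real"
  assumes "strict_mono g" "isCont g y"
  shows "filterlim g (at (g y) within {g y..}) (at y within {y..})"
  unfolding filterlim_at
proof
  show "\<forall>\<^sub>F z in at y within {y..}. g z \<in> {g y..} \<and> g z \<noteq> g y"
    using assms(1) by (auto simp: eventually_at_filter strict_mono_less_eq strict_mono_eq)
  show "filterlim g (nhds (g y)) (at y within {y..})"
    using assms(2) continuous_at_imp_continuous_at_within continuous_within by blast
qed

lemma filterlim_at_within_Iic_strict_mono:
  fixes g :: "real \<Rightarrow> real"
  assumes "strict_mono g" "isCont g y"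
  shows "filterlim g (at (g y) within {..g y}) (at y within {..y})"
  unfolding filterlim_at
proof
  show "\<forall>\<^sub>F z in at y within {..y}. g z \<in> {..g y} \<and> g z \<noteq> g y"
    using assms(1) by (auto simp: eventually_at_filter strict_mono_less_eq strict_mono_eq)
  show "filterlim g (nhds (g y)) (at y within {..y})"
    using assms(2) continuous_at_imp_continuous_at_within continuous_within by blast
qed

section \<open>Translations near infinity\<close>

definition translation_length :: "real filter \<Rightarrow> (real \<Rightarrow> real) \<Rightarrow> real" where
  "translation_length F f = (THE m. \<forall>\<^sub>F x in F. f x = x + m)"

lemma translation_length_eq:
  assumes "F \<noteq> bot" "\<forall>\<^sub>F x in F. f x = x + m"
  shows "translation_length F f = m"
  unfolding translation_length_def
proof (rule the_equality)
  fix m' assume "\<forall>\<^sub>F x in F. f x = x + m'"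
  with assms(2) have "\<forall>\<^sub>F x in F. m' = m"
    by eventually_elim simp
  with assms(1) show "m' = m"
    by simp
qed (rule assms(2))

lemma filterlim_add_const_at_top: "filterlim (\<lambda>x. x + c) at_top (at_top :: real filter)"
  by (subst add.commute) (rule filterlim_tendsto_add_at_top[OF tendsto_const filterlim_ident])

lemma filterlim_add_const_at_bot: "filterlim (\<lambda>x. x + c) at_bot (at_bot :: real filter)"
  using filterlim_tendsto_add_at_bot_iff[OF tendsto_const, of c "\<lambda>x. x"] filterlim_ident
  by (simp add: add.commute)

lemma eventually_translation_comp:
  fixes f g :: "real \<Rightarrow> real"
  assumes f: "\<forall>\<^sub>F x in F. f x = x + m" and g: "\<forall>\<^sub>F x in F. g x = x + n"
    and shift: "filterlim (\<lambda>x. x + n) F F"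
  shows "\<forall>\<^sub>F x in F. f (g x) = x + (m + n)"
proof -
  have "\<forall>\<^sub>F x in F. f (x + n) = x + n + m"
    using filterlim_iff[THEN iffD1, OF shift] f by blast
  with g show ?thesis
    by eventually_elim (simp add: algebra_simps)
qed

lemma eventually_translation_inverse:
  fixes f g :: "real \<Rightarrow> real"
  assumes f: "\<forall>\<^sub>F x in F. f x = x + m" and shift: "filterlim (\<lambda>x. x + - m) F F"
    and gf: "\<And>x. g (f x) = x"
  shows "\<forall>\<^sub>F x in F. g x = x + - m"
proof -
  have "\<forall>\<^sub>F x in F. f (x + - m) = x"
    using filterlim_iff[THEN iffD1, OF shift, rule_format, OF f] by simp
  then show ?thesis
    by eventually_elim (metis gf)
qed

section \<open>Tame homeomorphisms and their additive invariants\<close>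

definition breakpoints :: "(real \<Rightarrow> real) \<Rightarrow> real set" where
  "breakpoints f = {x. right_deriv f x \<noteq> left_deriv f x}"

definition log_jump_sum :: "(real \<Rightarrow> real) \<Rightarrow> real" where
  "log_jump_sum f = (\<Sum>x\<in>breakpoints f. ln (right_deriv f x) - ln (left_deriv f x))"

definition tame :: "(real \<Rightarrow> real) \<Rightarrow> bool" where
  "tame f \<longleftrightarrow> mono f \<and> bij f
     \<and> (\<forall>x. \<exists>D>0. (f has_real_derivative D) (at x within {x..}))
     \<and> (\<forall>x. \<exists>D>0. (f has_real_derivative D) (at x within {..x}))
     \<and> finite (breakpoints f)
     \<and> (\<exists>m. \<forall>\<^sub>F x in at_top. f x = x + m)
     \<and> (\<exists>m. \<forall>\<^sub>F x in at_bot. f x = x + m)"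

lemma tameD:
  assumes "tame f"
  shows "mono f" "bij f" "finite (breakpoints f)"
    "\<exists>m. \<forall>\<^sub>F x in at_top. f x = x + m" "\<exists>m. \<forall>\<^sub>F x in at_bot. f x = x + m"
  using assms unfolding tame_def by simp_all

lemma tame_right_deriv:
  assumes "tame f"
  shows "(f has_real_derivative right_deriv f x) (at x within {x..})" "right_deriv f x > 0"
proof -
  obtain D where "D > 0" "(f has_real_derivative D) (at x within {x..})"
    using assms unfolding tame_def by blast
  then show "(f has_real_derivative right_deriv f x) (at x within {x..})" "right_deriv f x > 0"
    using right_deriv_eq by auto
qed

lemma tame_left_deriv:
  assumes "tame f"
  shows "(f has_real_derivative left_deriv f x) (at x within {..x})" "left_deriv f x > 0"
proof -
  obtain D where "D > 0" "(f has_real_derivative D) (at x within {..x})"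
    using assms unfolding tame_def by blast
  then show "(f has_real_derivative left_deriv f x) (at x within {..x})" "left_deriv f x > 0"
    using left_deriv_eq by auto
qed

lemma log_jump_sum_superset:
  assumes "finite S" "breakpoints f \<subseteq> S"
  shows "log_jump_sum f = (\<Sum>x\<in>S. ln (right_deriv f x) - ln (left_deriv f x))"
  unfolding log_jump_sum_def
  by (rule sum.mono_neutral_left[OF assms]) (auto simp: breakpoints_def)

lemma tame_right_deriv_comp:
  assumes "tame f" "tame g"
  shows "((\<lambda>y. f (g y)) has_real_derivative right_deriv f (g x) * right_deriv g x) (at x within {x..})"
proof (rule has_real_derivative_comp_mono[OF tameD(1)[OF assms(2)] _ tame_right_deriv(1)[OF assms(2)]])
  show "(f has_real_derivative right_deriv f (g x)) (at (g x) within g ` {x..})"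
    by (rule has_field_derivative_subset[OF tame_right_deriv(1)[OF assms(1)]])
      (auto intro: monoD[OF tameD(1)[OF assms(2)]])
qed

lemma tame_left_deriv_comp:
  assumes "tame f" "tame g"
  shows "((\<lambda>y. f (g y)) has_real_derivative left_deriv f (g x) * left_deriv g x) (at x within {..x})"
proof (rule has_real_derivative_comp_mono[OF tameD(1)[OF assms(2)] _ tame_left_deriv(1)[OF assms(2)]])
  show "(f has_real_derivative left_deriv f (g x)) (at (g x) within g ` {..x})"
    by (rule has_field_derivative_subset[OF tame_left_deriv(1)[OF assms(1)]])
      (auto intro: monoD[OF tameD(1)[OF assms(2)]])
qed

lemma breakpoints_comp:
  assumes "tame f" "tame g"
  shows "breakpoints (\<lambda>x. f (g x)) \<subseteq> breakpoints g \<union> g -` breakpoints f"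
proof
  fix x assume "x \<in> breakpoints (\<lambda>x. f (g x))"
  then have "right_deriv f (g x) * right_deriv g x \<noteq> left_deriv f (g x) * left_deriv g x"
    by (simp add: breakpoints_def right_deriv_eq[OF tame_right_deriv_comp[OF assms]]
        left_deriv_eq[OF tame_left_deriv_comp[OF assms]])
  then show "x \<in> breakpoints g \<union> g -` breakpoints f"
    unfolding breakpoints_def by auto
qed

lemma finite_breakpoints_comp:
  assumes "tame f" "tame g"
  shows "finite (breakpoints g \<union> g -` breakpoints f)"
  using tameD(3)[OF assms(2)] finite_vimageI[OF tameD(3)[OF assms(1)] bij_is_inj[OF tameD(2)[OF assms(2)]]]
  by blast

lemma tame_comp:
  assumes f: "tame f" and g: "tame g"
  shows "tame (\<lambda>x. f (g x))"
  unfolding tame_def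
proof (intro conjI allI)
  show "mono (\<lambda>x. f (g x))"
    using tameD(1)[OF f] tameD(1)[OF g] by (simp add: mono_def)
  show "bij (\<lambda>x. f (g x))"
    using bij_comp[OF tameD(2)[OF g] tameD(2)[OF f]] by (simp add: o_def)
  show "finite (breakpoints (\<lambda>x. f (g x)))"
    using breakpoints_comp[OF f g] finite_breakpoints_comp[OF f g] by (rule finite_subset)
  show "\<exists>m. \<forall>\<^sub>F x in at_top. f (g x) = x + m"
    using tameD(4)[OF f] tameD(4)[OF g] eventually_translation_comp filterlim_add_const_at_top by blast
  show "\<exists>m. \<forall>\<^sub>F x in at_bot. f (g x) = x + m"
    using tameD(5)[OF f] tameD(5)[OF g] eventually_translation_comp filterlim_add_const_at_bot by blast
  fix x
  show "\<exists>D>0. ((\<lambda>x. f (g x)) has_real_derivative D) (at x within {x..})"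
    using tame_right_deriv_comp[OF f g, of x] tame_right_deriv(2)[OF f, of "g x"] tame_right_deriv(2)[OF g, of x]
    by (intro exI[of _ "right_deriv f (g x) * right_deriv g x"]) simp
  show "\<exists>D>0. ((\<lambda>x. f (g x)) has_real_derivative D) (at x within {..x})"
    using tame_left_deriv_comp[OF f g, of x] tame_left_deriv(2)[OF f, of "g x"] tame_left_deriv(2)[OF g, of x]
    by (intro exI[of _ "left_deriv f (g x) * left_deriv g x"]) simp
qed

lemma translation_length_comp:
  fixes f g :: "real \<Rightarrow> real"
  assumes "F \<noteq> bot" "\<And>c. filterlim (\<lambda>x. x + c) F F"
    and "\<forall>\<^sub>F x in F. f x = x + m" "\<forall>\<^sub>F x in F. g x = x + n"
  shows "translation_length F (\<lambda>x. f (g x)) = translation_length F f + translation_length F g"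
  using translation_length_eq[OF assms(1)] eventually_translation_comp[OF assms(3,4,2)] assms(3,4)
  by simp

lemma tame_translation_length_comp:
  assumes "tame f" "tame g"
  shows "translation_length at_top (\<lambda>x. f (g x)) = translation_length at_top f + translation_length at_top g"
    "translation_length at_bot (\<lambda>x. f (g x)) = translation_length at_bot f + translation_length at_bot g"
  using translation_length_comp[OF trivial_limit_at_top_linorder filterlim_add_const_at_top]
    translation_length_comp[OF trivial_limit_at_bot_linorder filterlim_add_const_at_bot]
    tameD(4,5)[OF assms(1)] tameD(4,5)[OF assms(2)]
  by blast+

lemma log_jump_sum_comp:
  assumes f: "tame f" and g: "tame g"
  shows "log_jump_sum (\<lambda>x. f (g x)) = log_jump_sum f + log_jump_sum g"
proof -
  define S where "S = breakpoints g \<union> g -` breakpoints f"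
  have S: "finite S" using finite_breakpoints_comp[OF f g] by (simp add: S_def)
  have "log_jump_sum (\<lambda>x. f (g x))
      = (\<Sum>x\<in>S. ln (right_deriv f (g x) * right_deriv g x) - ln (left_deriv f (g x) * left_deriv g x))"
    using log_jump_sum_superset[OF S breakpoints_comp[OF f g, folded S_def]]
    by (simp add: right_deriv_eq[OF tame_right_deriv_comp[OF f g]] left_deriv_eq[OF tame_left_deriv_comp[OF f g]])
  also have "\<dots> = (\<Sum>x\<in>S. ln (right_deriv f (g x)) - ln (left_deriv f (g x)))
                 + (\<Sum>x\<in>S. ln (right_deriv g x) - ln (left_deriv g x))"
    using tame_right_deriv(2)[OF f] tame_right_deriv(2)[OF g] tame_left_deriv(2)[OF f] tame_left_deriv(2)[OF g]
    by (simp add: ln_mult_pos sum.distrib[symmetric] algebra_simps)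
  also have "(\<Sum>x\<in>S. ln (right_deriv f (g x)) - ln (left_deriv f (g x)))
           = (\<Sum>y\<in>g ` S. ln (right_deriv f y) - ln (left_deriv f y))"
    by (subst sum.reindex) (auto intro: inj_on_subset[OF bij_is_inj[OF tameD(2)[OF g]]])
  also have "\<dots> = log_jump_sum f"
  proof (rule log_jump_sum_superset[symmetric])
    show "finite (g ` S)" using S by simp
    show "breakpoints f \<subseteq> g ` S"
      using bij_is_surj[OF tameD(2)[OF g]] by (force simp: S_def)
  qed
  also have "(\<Sum>x\<in>S. ln (right_deriv g x) - ln (left_deriv g x)) = log_jump_sum g"
    by (rule log_jump_sum_superset[symmetric, OF S]) (simp add: S_def)
  finally show ?thesis .
qed

lemma tame_id: "tame (\<lambda>x. x)"
  and breakpoints_id: "breakpoints (\<lambda>x. x) = {}"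
proof -
  have R: "((\<lambda>x. x) has_real_derivative 1) (at x within {x..})"
   and L: "((\<lambda>x. x) has_real_derivative 1) (at x within {..x})" for x :: real
    by (rule DERIV_ident)+
  show "breakpoints (\<lambda>x. x) = {}"
    by (simp add: breakpoints_def right_deriv_eq[OF R] left_deriv_eq[OF L])
  then show "tame (\<lambda>x. x)"
    unfolding tame_def using R L bij_id by (auto simp: mono_def id_def intro!: exI[of _ 1])
qed

lemma tame_inv:
  assumes f: "tame f"
  shows "tame (inv_into UNIV f)"
proof -
  define g where "g = inv_into UNIV f"
  have fg: "f (g y) = y" and gf: "g (f x) = x" for x y
    using tameD(2)[OF f] by (simp_all add: g_def bij_is_surj bij_is_inj surj_f_inv_f)
  have "bij g" "mono g"
    using tameD(1,2)[OF f] by (simp_all add: g_def bij_imp_bij_inv mono_inv)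
  then have "strict_mono g" and cont: "isCont g y" for y
    by (simp_all add: strict_mono_iff_mono bij_is_inj bij_is_surj mono_surj_isCont)
  have R: "(g has_real_derivative inverse (right_deriv f (g y))) (at y within {y..})" for y
    by (rule has_real_derivative_inverse_within[OF tame_right_deriv(1)[OF f] _
          filterlim_at_within_Ici_strict_mono[OF \<open>strict_mono g\<close> cont] fg])
      (use tame_right_deriv(2)[OF f, of "g y"] in auto)
  have L: "(g has_real_derivative inverse (left_deriv f (g y))) (at y within {..y})" for y
    by (rule has_real_derivative_inverse_within[OF tame_left_deriv(1)[OF f] _
          filterlim_at_within_Iic_strict_mono[OF \<open>strict_mono g\<close> cont] fg])
      (use tame_left_deriv(2)[OF f, of "g y"] in auto)
  have "breakpoints g \<subseteq> f ` breakpoints f"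
  proof
    fix y assume "y \<in> breakpoints g"
    then have "g y \<in> breakpoints f"
      by (simp add: breakpoints_def right_deriv_eq[OF R] left_deriv_eq[OF L])
    then show "y \<in> f ` breakpoints f"
      by (metis fg image_eqI)
  qed
  then have "finite (breakpoints g)"
    using tameD(3)[OF f] finite_surj by blast
  moreover have "\<exists>m. \<forall>\<^sub>F x in at_top. g x = x + m"
    using tameD(4)[OF f] by (metis eventually_translation_inverse filterlim_add_const_at_top gf)
  moreover have "\<exists>m. \<forall>\<^sub>F x in at_bot. g x = x + m"
    using tameD(5)[OF f] by (metis eventually_translation_inverse filterlim_add_const_at_bot gf)
  moreover have "\<exists>D>0. (g has_real_derivative D) (at y within {y..})" for y
    using R[of y] tame_right_deriv(2)[OF f, of "g y"] by (intro exI[of _ "inverse (right_deriv f (g y))"]) simp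
  moreover have "\<exists>D>0. (g has_real_derivative D) (at y within {..y})" for y
    using L[of y] tame_left_deriv(2)[OF f, of "g y"] by (intro exI[of _ "inverse (left_deriv f (g y))"]) simp
  ultimately show ?thesis
    unfolding g_def[symmetric] tame_def using \<open>bij g\<close> \<open>mono g\<close> by blast
qed

lemma translation_length_id: "F \<noteq> bot \<Longrightarrow> translation_length F (\<lambda>x. x) = 0"
  using translation_length_eq[of F "\<lambda>x. x" 0] by simp

lemma log_jump_sum_id: "log_jump_sum (\<lambda>x. x) = 0"
  by (simp add: log_jump_sum_def breakpoints_id)

lemma tame_inv_invariants:
  assumes f: "tame f"
  shows "translation_length at_top (inv_into UNIV f) = - translation_length at_top f"
    "translation_length at_bot (inv_into UNIV f) = - translation_length at_bot f"
    "log_jump_sum (inv_into UNIV f) = - log_jump_sum f"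
proof -
  have id: "(\<lambda>x. f (inv_into UNIV f x)) = (\<lambda>x. x)"
    using tameD(2)[OF f] by (simp add: bij_is_surj surj_f_inv_f)
  show "translation_length at_top (inv_into UNIV f) = - translation_length at_top f"
    "translation_length at_bot (inv_into UNIV f) = - translation_length at_bot f"
    using tame_translation_length_comp[OF f tame_inv[OF f], unfolded id] by (simp_all add: translation_length_id)
  show "log_jump_sum (inv_into UNIV f) = - log_jump_sum f"
    using log_jump_sum_comp[OF f tame_inv[OF f], unfolded id] by (simp add: log_jump_sum_id)
qed

section \<open>The generators\<close>

lemma tame_from_one_sided_derivatives:
  fixes f R L :: "real \<Rightarrow> real"
  assumes "mono f" "bij f"
    and R: "\<And>x. (f has_real_derivative R x) (at x within {x..})" "\<And>x. R x > 0"
    and L: "\<And>x. (f has_real_derivative L x) (at x within {..x})" "\<And>x. L x > 0"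
    and B: "finite B" "\<And>x. x \<notin> B \<Longrightarrow> R x = L x"
    and top: "\<forall>\<^sub>F x in at_top. f x = x + p" and bot: "\<forall>\<^sub>F x in at_bot. f x = x + q"
  shows "tame f" "log_jump_sum f = (\<Sum>x\<in>B. ln (R x) - ln (L x))"
    "translation_length at_top f = p" "translation_length at_bot f = q"
proof -
  have "breakpoints f \<subseteq> B"
    using B(2) by (auto simp: breakpoints_def right_deriv_eq[OF R(1)] left_deriv_eq[OF L(1)])
  then show "tame f"
    unfolding tame_def using assms finite_subset by blast
  show "log_jump_sum f = (\<Sum>x\<in>B. ln (R x) - ln (L x))"
    using log_jump_sum_superset[OF B(1) \<open>breakpoints f \<subseteq> B\<close>]
    by (simp add: right_deriv_eq[OF R(1)] left_deriv_eq[OF L(1)])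
  show "translation_length at_top f = p" "translation_length at_bot f = q"
    by (simp_all add: translation_length_eq top bot)
qed

lemma mono_on_glue:
  fixes f :: "'a :: linorder \<Rightarrow> 'b :: order"
  assumes "mono_on A f" "mono_on B f" "c \<in> A" "c \<in> B" "\<And>x. x \<in> A \<Longrightarrow> x \<le> c" "\<And>y. y \<in> B \<Longrightarrow> c \<le> y"
  shows "mono_on (A \<union> B) f"
proof (rule mono_onI)
  fix x y assume "x \<in> A \<union> B" "y \<in> A \<union> B" "x \<le> y"
  then consider "x \<in> A" "y \<in> A" | "x \<in> B" "y \<in> B" | "x \<in> A" "y \<in> B" | "x \<in> B" "y \<in> A" "x = c" "y = c"
    using assms(5,6) by fastforce
  then show "f x \<le> f y"
  proof cases
    case 3
    then have "f x \<le> f c" "f c \<le> f y"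
      using assms by (auto intro: mono_onD)
    then show ?thesis by (rule order_trans)
  qed (use assms(1,2) \<open>x \<le> y\<close> in \<open>auto intro: mono_onD\<close>)
qed

lemma tame_gen_a:
  "tame gen_a" "log_jump_sum gen_a = 0"
  "translation_length at_top gen_a = 1" "translation_length at_bot gen_a = 1"
proof -
  have "bij gen_a"
    by (rule bij_betw_byWitness[where f'="\<lambda>y. y - 1"]) (auto simp: gen_a_def)
  moreover have "(gen_a has_real_derivative 1) (at x within S)" for x S
    unfolding gen_a_def by (auto intro!: derivative_eq_intros)
  ultimately show "tame gen_a" "log_jump_sum gen_a = 0"
    "translation_length at_top gen_a = 1" "translation_length at_bot gen_a = 1"
    using tame_from_one_sided_derivatives[of gen_a "\<lambda>_. 1" "\<lambda>_. 1" "{}" 1 1]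
    by (auto simp: gen_a_def mono_def)
qed

lemma gen_b_pieces:
  "t \<le> 0 \<Longrightarrow> gen_b t = t"
  "0 \<le> t \<Longrightarrow> t \<le> 1/2 \<Longrightarrow> gen_b t = t / (1 - t)"
  "1/2 \<le> t \<Longrightarrow> t \<le> 1 \<Longrightarrow> gen_b t = (3*t - 1) / t"
  "1 \<le> t \<Longrightarrow> gen_b t = t + 1"
proof -
  assume "1/2 \<le> t" "t \<le> 1"
  then consider "t = 1/2" | "1/2 < t"
    by linarith
  then show "gen_b t = (3*t - 1) / t"
  proof cases
    case 1
    show ?thesis unfolding 1 gen_b_def by simp
  qed (use \<open>t \<le> 1\<close> in \<open>simp add: gen_b_def\<close>)
qed (auto simp: gen_b_def)

text \<open>\<open>gen_b\<close> is \<open>C\<^sup>1\<close>: its one-sided derivatives agree at \<open>0\<close>, \<open>1/2\<close> and \<open>1\<close>, so one table serves both sides.\<close>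

definition b_deriv :: "real \<Rightarrow> real" where
  "b_deriv t = (if t \<le> 0 then 1 else if t \<le> 1/2 then 1 / (1 - t)^2 else if t \<le> 1 then 1 / t^2 else 1)"

lemma gen_b_has_right_derivative: "(gen_b has_real_derivative b_deriv x) (at x within {x..})"
proof -
  consider "x < 0" | "0 \<le> x" "x < 1/2" | "1/2 \<le> x" "x < 1" | "1 \<le> x"
    by linarith
  then show ?thesis
  proof cases
    case 1
    show ?thesis
      by (rule has_real_derivative_at_within_Ici_transform[of "\<lambda>t. t" _ _ "- x"])
        (use 1 in \<open>auto intro!: derivative_eq_intros simp: b_deriv_def gen_b_pieces\<close>)
  next
    case 2
    show ?thesis
      by (rule has_real_derivative_at_within_Ici_transform[of "\<lambda>t. t / (1 - t)" _ _ "1/2 - x"])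
        (use 2 in \<open>auto intro!: derivative_eq_intros simp: b_deriv_def gen_b_pieces field_simps power2_eq_square\<close>)
  next
    case 3
    show ?thesis
      by (rule has_real_derivative_at_within_Ici_transform[of "\<lambda>t. (3*t - 1) / t" _ _ "1 - x"])
        (use 3 in \<open>auto intro!: derivative_eq_intros simp: b_deriv_def gen_b_pieces field_simps power2_eq_square\<close>)
  next
    case 4
    show ?thesis
      by (rule has_real_derivative_at_within_Ici_transform[of "\<lambda>t. t + 1" _ _ 1])
        (use 4 in \<open>auto intro!: derivative_eq_intros simp: b_deriv_def gen_b_pieces\<close>)
  qed
qed

lemma gen_b_has_left_derivative: "(gen_b has_real_derivative b_deriv x) (at x within {..x})"
proof -
  consider "x \<le> 0" | "0 < x" "x \<le> 1/2" | "1/2 < x" "x \<le> 1" | "1 < x"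
    by linarith
  then show ?thesis
  proof cases
    case 1
    show ?thesis
      by (rule has_real_derivative_at_within_Iic_transform[of "\<lambda>t. t" _ _ 1])
        (use 1 in \<open>auto intro!: derivative_eq_intros simp: b_deriv_def gen_b_pieces\<close>)
  next
    case 2
    show ?thesis
      by (rule has_real_derivative_at_within_Iic_transform[of "\<lambda>t. t / (1 - t)" _ _ x])
        (use 2 in \<open>auto intro!: derivative_eq_intros simp: b_deriv_def gen_b_pieces field_simps power2_eq_square\<close>)
  next
    case 3
    show ?thesis
      by (rule has_real_derivative_at_within_Iic_transform[of "\<lambda>t. (3*t - 1) / t" _ _ "x - 1/2"])
        (use 3 in \<open>auto intro!: derivative_eq_intros simp: b_deriv_def gen_b_pieces field_simps power2_eq_square\<close>)
  next
    case 4
    show ?thesis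
      by (rule has_real_derivative_at_within_Iic_transform[of "\<lambda>t. t + 1" _ _ "x - 1"])
        (use 4 in \<open>auto intro!: derivative_eq_intros simp: b_deriv_def gen_b_pieces\<close>)
  qed
qed

lemma mono_gen_b: "mono gen_b"
proof -
  have pieces: "mono_on {..0} gen_b" "mono_on {0..1/2} gen_b" "mono_on {1/2..1} gen_b" "mono_on {1..} gen_b"
    by (auto intro!: mono_onI simp: gen_b_pieces divide_simps algebra_simps)
  have "mono_on ({1/2..1} \<union> {1..}) gen_b"
    by (rule mono_on_glue[where c=1]) (use pieces in auto)
  then have "mono_on ({0..1/2} \<union> ({1/2..1} \<union> {1..})) gen_b"
    by (rule mono_on_glue[where c="1/2", OF pieces(2)]) auto
  then have "mono_on ({..0} \<union> ({0..1/2} \<union> ({1/2..1} \<union> {1..}))) gen_b"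
    by (rule mono_on_glue[where c=0, OF pieces(1)]) auto
  moreover have "{..0} \<union> ({0..1/2} \<union> ({1/2..1} \<union> {1..})) = (UNIV :: real set)"
    by auto
  ultimately show ?thesis
    by simp
qed

lemma bij_gen_b: "bij gen_b"
proof (rule bij_betw_byWitness)
  define g :: "real \<Rightarrow> real" where
    "g t = (if t \<le> 0 then t else if t \<le> 1 then t / (1 + t) else if t \<le> 2 then 1 / (3 - t) else t - 1)" for t
  show "\<forall>x\<in>UNIV. g (gen_b x) = x"
  proof
    fix x :: real
    consider "x \<le> 0" | "0 < x" "x \<le> 1/2" | "1/2 < x" "x \<le> 1" | "1 < x"
      by linarith
    then show "g (gen_b x) = x"
      by cases (auto simp: g_def gen_b_pieces divide_simps)
  qed
  show "\<forall>y\<in>UNIV. gen_b (g y) = y"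
  proof
    fix y :: real
    consider "y \<le> 0" | "0 < y" "y \<le> 1" | "1 < y" "y \<le> 2" | "2 < y"
      by linarith
    then show "gen_b (g y) = y"
      by cases (auto simp: g_def gen_b_pieces divide_simps)
  qed
qed auto

lemma tame_gen_b:
  "tame gen_b" "log_jump_sum gen_b = 0"
  "translation_length at_top gen_b = 1" "translation_length at_bot gen_b = 0"
proof -
  have top: "\<forall>\<^sub>F x in at_top. gen_b x = x + 1"
    by (rule eventually_at_top_linorderI[of 1]) (simp add: gen_b_pieces)
  have bot: "\<forall>\<^sub>F x in at_bot. gen_b x = x + 0"
    by (rule eventually_at_bot_linorderI[of 0]) (simp add: gen_b_pieces)
  have pos: "b_deriv x > 0" for x
    by (simp add: b_deriv_def)
  show "tame gen_b" "log_jump_sum gen_b = 0"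
    "translation_length at_top gen_b = 1" "translation_length at_bot gen_b = 0"
    using tame_from_one_sided_derivatives[OF mono_gen_b bij_gen_b gen_b_has_right_derivative pos
        gen_b_has_left_derivative pos finite.emptyI refl top bot]
    by simp_all
qed

lemma gen_c_pieces:
  "t \<le> 0 \<Longrightarrow> gen_c t = t"
  "0 \<le> t \<Longrightarrow> t \<le> 1 \<Longrightarrow> gen_c t = 2*t / (t + 1)"
  "1 \<le> t \<Longrightarrow> gen_c t = t"
proof -
  assume "1 \<le> t"
  then consider "t = 1" | "1 < t"
    by linarith
  then show "gen_c t = t"
  proof cases
    case 1
    show ?thesis unfolding 1 gen_c_def by simp
  qed (simp add: gen_c_def)
qed (auto simp: gen_c_def)

definition c_right_deriv :: "real \<Rightarrow> real" where
  "c_right_deriv t = (if t < 0 then 1 else if t < 1 then 2 / (t + 1)^2 else 1)"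

definition c_left_deriv :: "real \<Rightarrow> real" where
  "c_left_deriv t = (if t \<le> 0 then 1 else if t \<le> 1 then 2 / (t + 1)^2 else 1)"

lemma gen_c_has_right_derivative: "(gen_c has_real_derivative c_right_deriv x) (at x within {x..})"
proof -
  consider "x < 0" | "0 \<le> x" "x < 1" | "1 \<le> x"
    by linarith
  then show ?thesis
  proof cases
    case 1
    show ?thesis
      by (rule has_real_derivative_at_within_Ici_transform[of "\<lambda>t. t" _ _ "- x"])
        (use 1 in \<open>auto intro!: derivative_eq_intros simp: c_right_deriv_def gen_c_pieces\<close>)
  next
    case 2
    show ?thesis
      by (rule has_real_derivative_at_within_Ici_transform[of "\<lambda>t. 2*t / (t + 1)" _ _ "1 - x"])
        (use 2 in \<open>auto intro!: derivative_eq_intros simp: c_right_deriv_def gen_c_pieces field_simps power2_eq_square\<close>)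
  next
    case 3
    show ?thesis
      by (rule has_real_derivative_at_within_Ici_transform[of "\<lambda>t. t" _ _ 1])
        (use 3 in \<open>auto intro!: derivative_eq_intros simp: c_right_deriv_def gen_c_pieces\<close>)
  qed
qed

lemma gen_c_has_left_derivative: "(gen_c has_real_derivative c_left_deriv x) (at x within {..x})"
proof -
  consider "x \<le> 0" | "0 < x" "x \<le> 1" | "1 < x"
    by linarith
  then show ?thesis
  proof cases
    case 1
    show ?thesis
      by (rule has_real_derivative_at_within_Iic_transform[of "\<lambda>t. t" _ _ 1])
        (use 1 in \<open>auto intro!: derivative_eq_intros simp: c_left_deriv_def gen_c_pieces\<close>)
  next
    case 2
    show ?thesis
      by (rule has_real_derivative_at_within_Iic_transform[of "\<lambda>t. 2*t / (t + 1)" _ _ x])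
        (use 2 in \<open>auto intro!: derivative_eq_intros simp: c_left_deriv_def gen_c_pieces field_simps power2_eq_square\<close>)
  next
    case 3
    show ?thesis
      by (rule has_real_derivative_at_within_Iic_transform[of "\<lambda>t. t" _ _ "x - 1"])
        (use 3 in \<open>auto intro!: derivative_eq_intros simp: c_left_deriv_def gen_c_pieces\<close>)
  qed
qed

lemma mono_gen_c: "mono gen_c"
proof -
  have pieces: "mono_on {..0} gen_c" "mono_on {0..1} gen_c" "mono_on {1..} gen_c"
    by (auto intro!: mono_onI simp: gen_c_pieces divide_simps algebra_simps)
  have "mono_on ({0..1} \<union> {1..}) gen_c"
    by (rule mono_on_glue[where c=1]) (use pieces in auto)
  then have "mono_on ({..0} \<union> ({0..1} \<union> {1..})) gen_c"
    by (rule mono_on_glue[where c=0, OF pieces(1)]) auto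
  moreover have "{..0} \<union> ({0..1} \<union> {1..}) = (UNIV :: real set)"
    by auto
  ultimately show ?thesis
    by simp
qed

lemma bij_gen_c: "bij gen_c"
proof (rule bij_betw_byWitness)
  define g :: "real \<Rightarrow> real" where
    "g t = (if 0 \<le> t \<and> t \<le> 1 then t / (2 - t) else t)" for t
  show "\<forall>x\<in>UNIV. g (gen_c x) = x"
  proof
    fix x :: real
    consider "x < 0" | "0 \<le> x" "x \<le> 1" | "1 < x"
      by linarith
    then show "g (gen_c x) = x"
      by cases (auto simp: g_def gen_c_pieces divide_simps)
  qed
  show "\<forall>y\<in>UNIV. gen_c (g y) = y"
  proof
    fix y :: real
    consider "y < 0" | "0 \<le> y" "y \<le> 1" | "1 < y"
      by linarith
    then show "gen_c (g y) = y"
      by cases (auto simp: g_def gen_c_pieces divide_simps)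
  qed
qed auto

lemma tame_gen_c:
  "tame gen_c" "log_jump_sum gen_c = 2 * ln 2"
  "translation_length at_top gen_c = 0" "translation_length at_bot gen_c = 0"
proof -
  have top: "\<forall>\<^sub>F x in at_top. gen_c x = x + 0"
    by (rule eventually_at_top_linorderI[of 1]) (simp add: gen_c_pieces)
  have bot: "\<forall>\<^sub>F x in at_bot. gen_c x = x + 0"
    by (rule eventually_at_bot_linorderI[of 0]) (simp add: gen_c_pieces)
  have pos: "c_right_deriv x > 0" "c_left_deriv x > 0" for x
    by (simp_all add: c_right_deriv_def c_left_deriv_def)
  have agree: "x \<notin> {0, 1} \<Longrightarrow> c_right_deriv x = c_left_deriv x" for x
    by (cases "x < 0"; cases "x < 1") (auto simp: c_right_deriv_def c_left_deriv_def)
  note c = tame_from_one_sided_derivatives[where B="{0, 1}", OF mono_gen_c bij_gen_c gen_c_has_right_derivative pos(1)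
      gen_c_has_left_derivative pos(2) _ agree top bot]
  then show "tame gen_c" "translation_length at_top gen_c = 0" "translation_length at_bot gen_c = 0"
    by simp_all
  show "log_jump_sum gen_c = 2 * ln 2"
    using c(2) by (simp add: c_right_deriv_def c_left_deriv_def ln_div)
qed

section \<open>Kernels of homomorphisms onto abelian groups\<close>

lemma (in group_hom) derived_subset_kernel:
  assumes "comm_group H"
  shows "derived G (carrier G) \<subseteq> kernel G H h"
proof -
  have "h ` derived G (carrier G) = derived H (h ` carrier G)"
    by (simp add: derived_img)
  also have "\<dots> = {\<one>\<^bsub>H\<^esub>}"
    by (rule comm_group.derived_eq_singleton[OF assms]) auto
  finally show ?thesis
    using G.derived_in_carrier[of "carrier G"] by (auto simp: kernel_def)
qed

lemma (in group) hom_eq_on_generate: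
  assumes f: "f \<in> hom G H" and g: "g \<in> hom G H" and "group H" "S \<subseteq> carrier G"
    and agree: "\<And>s. s \<in> S \<Longrightarrow> f s = g s" and "x \<in> generate G S"
  shows "f x = g x"
  using \<open>x \<in> generate G S\<close>
proof (induction x rule: generate.induct)
  interpret f: group_hom G H f using f \<open>group H\<close> by (simp add: group_hom_def group_hom_axioms_def)
  interpret g: group_hom G H g using g \<open>group H\<close> by (simp add: group_hom_def group_hom_axioms_def)
  {
    case one
    show ?case by simp
  next
    case (incl s)
    then show ?case by (rule agree)
  next
    case (inv s)
    then show ?case using agree \<open>S \<subseteq> carrier G\<close> by auto
  next
    case (eng x y)
    then show ?case using generate_in_carrier[OF \<open>S \<subseteq> carrier G\<close>] by auto
  }
qed

lemma (in group) kernel_subset_derived: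
  assumes h: "h \<in> hom G H" and "group H" and \<psi>: "\<psi> \<in> hom H (G Mod derived G (carrier G))"
    and gen: "carrier G = generate G S"
    and agree: "\<And>s. s \<in> S \<Longrightarrow> \<psi> (h s) = derived G (carrier G) #> s"
  shows "kernel G H h \<subseteq> derived G (carrier G)"
proof
  define D where "D = derived G (carrier G)"
  interpret D: normal D G
    unfolding D_def by (rule derived_self_is_normal)
  interpret \<psi>: group_hom H "G Mod D" \<psi>
    using \<psi> \<open>group H\<close> D.factorgroup_is_group by (simp add: group_hom_def group_hom_axioms_def D_def)
  have "S \<subseteq> carrier G"
    unfolding gen by (blast intro: generate.incl)
  fix g assume "g \<in> kernel G H h"
  then have g: "g \<in> carrier G" "h g = \<one>\<^bsub>H\<^esub>"
    by (simp_all add: kernel_def)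
  have "(\<lambda>x. \<psi> (h x)) \<in> hom G (G Mod D)"
    using h \<psi> by (auto simp: hom_def Pi_def D_def)
  then have "D #> g = \<psi> (h g)"
  proof (rule hom_eq_on_generate[where x=g, OF D.r_coset_hom_Mod _ D.factorgroup_is_group \<open>S \<subseteq> carrier G\<close>])
    show "D #> s = \<psi> (h s)" if "s \<in> S" for s
      using agree[OF that] by (simp add: D_def)
    show "g \<in> generate G S"
      using g(1) by (simp only: gen)
  qed
  also have "\<dots> = D"
    using g(2) by simp
  finally show "g \<in> D"
    using rcos_self[OF g(1) normal_imp_subgroup[OF D.normal_axioms]] by simp
qed

section \<open>The homomorphism onto \<open>\<int>\<^sup>3\<close>\<close>

lemma carrier_SymR: "carrier SymR = {f. bij f}"
  by (auto simp: BijGroup_def Bij_def)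

lemma mult_SymR: "bij f \<Longrightarrow> bij g \<Longrightarrow> f \<otimes>\<^bsub>SymR\<^esub> g = (\<lambda>x. f (g x))"
  by (simp add: BijGroup_def Bij_def compose_def restrict_UNIV)

lemma one_SymR: "\<one>\<^bsub>SymR\<^esub> = (\<lambda>x. x)"
  by (simp add: BijGroup_def restrict_UNIV)

lemma inv_SymR: "bij f \<Longrightarrow> inv\<^bsub>SymR\<^esub> f = inv_into UNIV f"
  using inv_BijGroup[of f UNIV] by (simp add: Bij_def restrict_UNIV)

definition tame_int :: "(real \<Rightarrow> real) set" where
  "tame_int = {f. tame f \<and> translation_length at_bot f \<in> \<int> \<and> translation_length at_top f \<in> \<int>
                  \<and> log_jump_sum f / (2 * ln 2) \<in> \<int>}"

lemma subgroup_tame_int: "subgroup tame_int SymR"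
proof
  show "tame_int \<subseteq> carrier SymR"
    by (auto simp: tame_int_def carrier_SymR dest: tameD(2))
  show "\<one>\<^bsub>SymR\<^esub> \<in> tame_int"
    by (simp add: tame_int_def one_SymR tame_id translation_length_id log_jump_sum_id)
next
  fix f g assume f: "f \<in> tame_int" and g: "g \<in> tame_int"
  then have "tame f" "tame g"
    by (simp_all add: tame_int_def)
  with f g show "f \<otimes>\<^bsub>SymR\<^esub> g \<in> tame_int"
    by (simp add: tame_int_def mult_SymR tameD(2) tame_comp tame_translation_length_comp
        log_jump_sum_comp add_divide_distrib)
  from f \<open>tame f\<close> show "inv\<^bsub>SymR\<^esub> f \<in> tame_int"
    by (simp add: tame_int_def inv_SymR tameD(2) tame_inv tame_inv_invariants)
qed

lemma gens_tame_int: "{gen_a, gen_b, gen_c} \<subseteq> tame_int"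
  using tame_gen_a tame_gen_b tame_gen_c by (simp add: tame_int_def)

lemma subgroup_generate_gens: "subgroup (generate SymR {gen_a, gen_b, gen_c}) SymR"
  using group.generate_is_subgroup[OF group_BijGroup] gens_tame_int subgroup.subset[OF subgroup_tame_int]
  by blast

lemma group_G0: "group G0"
  unfolding G0_def by (rule subgroup.subgroup_is_group[OF subgroup_generate_gens group_BijGroup])

lemma carrier_G0_generate: "carrier G0 = generate G0 {gen_a, gen_b, gen_c}"
  using group.generate_consistent[OF group_BijGroup _ subgroup_generate_gens, of "{gen_a, gen_b, gen_c}"]
  by (simp add: G0_def generate.incl subsetI)

lemma carrier_G0_subset_tame_int: "carrier G0 \<subseteq> tame_int"
  unfolding G0_def
  by (simp add: group.generate_subgroup_incl[OF group_BijGroup gens_tame_int subgroup_tame_int])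

lemma mult_G0:
  assumes "f \<in> carrier G0" "g \<in> carrier G0"
  shows "f \<otimes>\<^bsub>G0\<^esub> g = (\<lambda>x. f (g x))"
proof -
  have "bij f" "bij g"
    using assms carrier_G0_subset_tame_int by (auto simp: tame_int_def dest: tameD(2))
  then show ?thesis
    by (simp add: G0_def mult_SymR)
qed

lemma gens_in_G0: "gen_a \<in> carrier G0" "gen_b \<in> carrier G0" "gen_c \<in> carrier G0"
  by (simp_all add: G0_def generate.incl)

lemma carrier_Z3: "carrier Z3 = UNIV"
  by (simp add: Z3_def)

lemma mult_Z3: "(i, j, k) \<otimes>\<^bsub>Z3\<^esub> (i', j', k') = (i + i', j + j', k + k')"
  by (simp add: Z3_def)

lemma one_Z3: "\<one>\<^bsub>Z3\<^esub> = (0, 0, 0)"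
  by (simp add: Z3_def)

lemma comm_group_Z3: "comm_group Z3"
proof (rule group.group_comm_groupI)
  show "group Z3"
    unfolding Z3_def by (intro DirProd_group group_integer_group)
qed (auto simp: mult_Z3)

lemma int_pow_Z3: "(i, j, k) [^]\<^bsub>Z3\<^esub> (n :: int) = (n * i, n * j, n * k)"
proof -
  have "(i, j, k) [^]\<^bsub>Z3\<^esub> (m :: nat) = (int m * i, int m * j, int m * k)" for m
    by (induction m) (simp_all add: one_Z3 mult_Z3 algebra_simps)
  moreover have "inv\<^bsub>Z3\<^esub> (i, j, k) = (- i, - j, - k)" for i j k
    by (rule group.inv_equality[OF comm_group.axioms(2)[OF comm_group_Z3]])
      (simp_all add: mult_Z3 one_Z3 carrier_Z3)
  ultimately show ?thesis
    by (simp add: int_pow_def2)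
qed

lemma floor_add_Ints: "(x :: real) \<in> \<int> \<Longrightarrow> y \<in> \<int> \<Longrightarrow> \<lfloor>x + y\<rfloor> = \<lfloor>x\<rfloor> + \<lfloor>y\<rfloor>"
  by (elim Ints_cases) simp

text \<open>On \<open>tame_int\<close> the three invariants are integers, so the floors are exact.\<close>

definition pi_Z3 :: "(real \<Rightarrow> real) \<Rightarrow> int \<times> int \<times> int" where
  "pi_Z3 f = (\<lfloor>translation_length at_bot f\<rfloor>,
              \<lfloor>translation_length at_top f - translation_length at_bot f\<rfloor>,
              \<lfloor>log_jump_sum f / (2 * ln 2)\<rfloor>)"

lemma pi_Z3_comp:
  assumes f: "f \<in> tame_int" and g: "g \<in> tame_int"
  shows "pi_Z3 (\<lambda>x. f (g x)) = pi_Z3 f \<otimes>\<^bsub>Z3\<^esub> pi_Z3 g"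
proof -
  let ?top = "translation_length at_top" and ?bot = "translation_length at_bot"
  have "tame f" "tame g" and ints: "?bot f \<in> \<int>" "?top f \<in> \<int>" "?bot g \<in> \<int>" "?top g \<in> \<int>"
    "log_jump_sum f / (2 * ln 2) \<in> \<int>" "log_jump_sum g / (2 * ln 2) \<in> \<int>"
    using f g by (simp_all add: tame_int_def)
  note comp = tame_translation_length_comp[OF \<open>tame f\<close> \<open>tame g\<close>] log_jump_sum_comp[OF \<open>tame f\<close> \<open>tame g\<close>]
  have "\<lfloor>?bot (\<lambda>x. f (g x))\<rfloor> = \<lfloor>?bot f\<rfloor> + \<lfloor>?bot g\<rfloor>"
    unfolding comp by (rule floor_add_Ints) (use ints in simp_all)
  moreover have "?top (\<lambda>x. f (g x)) - ?bot (\<lambda>x. f (g x)) = (?top f - ?bot f) + (?top g - ?bot g)"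
    unfolding comp by simp
  then have "\<lfloor>?top (\<lambda>x. f (g x)) - ?bot (\<lambda>x. f (g x))\<rfloor> = \<lfloor>?top f - ?bot f\<rfloor> + \<lfloor>?top g - ?bot g\<rfloor>"
    by (metis floor_add_Ints Ints_diff ints(1-4))
  moreover have "\<lfloor>log_jump_sum (\<lambda>x. f (g x)) / (2 * ln 2)\<rfloor>
      = \<lfloor>log_jump_sum f / (2 * ln 2)\<rfloor> + \<lfloor>log_jump_sum g / (2 * ln 2)\<rfloor>"
    unfolding comp add_divide_distrib by (rule floor_add_Ints) (use ints in simp_all)
  ultimately show ?thesis
    by (simp add: pi_Z3_def mult_Z3)
qed

lemma (in comm_group) int_pow_triple_hom:
  assumes "a \<in> carrier G" "b \<in> carrier G" "c \<in> carrier G"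
  shows "(\<lambda>(i, j, k). a [^] i \<otimes> b [^] j \<otimes> c [^] k) \<in> hom Z3 G"
  unfolding hom_def using assms by (auto simp: carrier_Z3 mult_Z3 int_pow_mult m_ac)

lemma pi_Z3_hom: "pi_Z3 \<in> hom G0 Z3"
  unfolding hom_def using carrier_G0_subset_tame_int by (auto simp: carrier_Z3 mult_G0 intro!: pi_Z3_comp)

lemma pi_Z3_gens: "pi_Z3 gen_a = (1, 0, 0)" "pi_Z3 gen_b = (0, 1, 0)" "pi_Z3 gen_c = (0, 0, 1)"
  using tame_gen_a tame_gen_b tame_gen_c by (simp_all add: pi_Z3_def)

lemma group_hom_pi_Z3: "group_hom G0 Z3 pi_Z3"
  using group_G0 comm_group_Z3 pi_Z3_hom by (simp add: group_hom_def group_hom_axioms_def comm_group.axioms(2))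

lemma pi_Z3_surj: "pi_Z3 ` carrier G0 = carrier Z3"
proof -
  interpret G0: group G0 by (rule group_G0)
  interpret pi: group_hom G0 Z3 pi_Z3 by (rule group_hom_pi_Z3)
  have "(i, j, k) \<in> pi_Z3 ` carrier G0" for i j k
  proof
    show "gen_a [^]\<^bsub>G0\<^esub> i \<otimes>\<^bsub>G0\<^esub> gen_b [^]\<^bsub>G0\<^esub> j \<otimes>\<^bsub>G0\<^esub> gen_c [^]\<^bsub>G0\<^esub> k \<in> carrier G0"
      using gens_in_G0 by simp
    then show "(i, j, k) = pi_Z3 (gen_a [^]\<^bsub>G0\<^esub> i \<otimes>\<^bsub>G0\<^esub> gen_b [^]\<^bsub>G0\<^esub> j \<otimes>\<^bsub>G0\<^esub> gen_c [^]\<^bsub>G0\<^esub> k)"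
      using gens_in_G0 by (simp add: pi.hom_int_pow pi_Z3_gens int_pow_Z3 mult_Z3)
  qed
  then show ?thesis
    by (auto simp: carrier_Z3)
qed

lemma kernel_pi_Z3: "kernel G0 Z3 pi_Z3 = derived G0 (carrier G0)"
proof
  show "derived G0 (carrier G0) \<subseteq> kernel G0 Z3 pi_Z3"
    by (rule group_hom.derived_subset_kernel[OF group_hom_pi_Z3 comm_group_Z3])
next
  interpret G0: group G0 by (rule group_G0)
  interpret Q: comm_group "G0 Mod derived G0 (carrier G0)"
    by (rule G0.derived_quot_is_comm_group)
  let ?coset = "\<lambda>g. derived G0 (carrier G0) #>\<^bsub>G0\<^esub> g"
  have cosets: "?coset gen_a \<in> carrier (G0 Mod derived G0 (carrier G0))"
    "?coset gen_b \<in> carrier (G0 Mod derived G0 (carrier G0))"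
    "?coset gen_c \<in> carrier (G0 Mod derived G0 (carrier G0))"
    using gens_in_G0 by (auto simp: FactGroup_def RCOSETS_def)
  show "kernel G0 Z3 pi_Z3 \<subseteq> derived G0 (carrier G0)"
    by (rule G0.kernel_subset_derived[OF pi_Z3_hom comm_group.axioms(2)[OF comm_group_Z3]
          Q.int_pow_triple_hom[OF cosets] carrier_G0_generate])
      (use cosets in \<open>auto simp: pi_Z3_gens simp del: mult_FactGroup one_FactGroup\<close>)
qed

theorem mainTheorem3:
  shows "\<exists>\<pi>. \<pi> \<in> hom G0 Z3
              \<and> \<pi> gen_a = (1, 0, 0) \<and> \<pi> gen_b = (0, 1, 0) \<and> \<pi> gen_c = (0, 0, 1)
              \<and> \<pi> ` carrier G0 = carrier Z3
              \<and> kernel G0 Z3 \<pi> = derived G0 (carrier G0)"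
  by (intro exI[of _ pi_Z3] conjI pi_Z3_hom pi_Z3_gens pi_Z3_surj kernel_pi_Z3)

end
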